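(* Assume (A1) with $\Omega\supseteq B(x^*,\delta)$, (A2), (A3), and (A4) with exponent $r\in(0,1]$. Let $\{x_k\}$ be generated by LMMSS with $\alpha_k=1$ and $\lambda_k=\|J_k^TF_k\|^r$ for all $k$. Then there exists $\varepsilon>0$ such that, if $x_0\in B(x^*,\varepsilon)$, the sequence $\{\operatorname{dist}(x_k,X^* )\}$ converges to zero superlinearly and $\{x_k\}$ converges to a point of $X^*\cap B(x^*,\delta/2)$.
   Context: Let $F:\mathbb{R}^n\to\mathbb{R}^m$ be twice continuously differentiable with $m\ge n$, $J(x)$ its Jacobian, $\phi(x)=\tfrac12\|F(x)\|^2$, $\nabla\phi(x)=J(x)^TF(x)$. Norms are Euclidean/spectral. $X^*=\{x: J(x)^TF(x)=0\}\neq\emptyset$; $\operatorname{dist}(x,X^* )=\inf_{z\in X^*}\|x-z\|$. Fix $x^*\in X^*$; $B(x^*,\delta)$ is the closed ball. $L\in\mathbb{R}^{p\times n}$ has rank $p\le n$. LMMSS iteration: given $x_k$ and $\lambda_k>0$, with $F_k=F(x_k)$, $J_k=J(x_k)$, let $d_k$ solve $(J_k^TJ_k+\lambda_kL^TL)d_k=-J_k^TF_k$ and $x_{k+1}=x_k+\alpha_kd_k$. (A1) there are $\Omega$ and $\gamma>0$ with $\|J(x)v\|^2+\|Lv\|^2\ge\gamma\|v\|^2$ for $x\in\Omega$, all $v$. (A2) $\delta\in(0,1)$, $L_0>0$ with $\|J(x)-J(y)\|\le L_0\|x-y\|$ on $B(x^*,\delta)$. (A3) $\omega>0$ with $\omega\operatorname{dist}(x,X^*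 )\le\|J(x)^TF(x)\|$ on $B(x^*,\delta)$. (A4) $r\in(0,1]$, $C\ge0$ with $\|(J(x)-J(z))^TF(z)\|\le C\|x-z\|^{1+r}$ for $x\in B(x^*,\delta)$, $z\in X^*\cap B(x^*,\delta)$. *)

theory Defs
  imports "HOL-Analysis.Analysis"
begin

definition spec_norm :: "real^'n^'m \<Rightarrow> real" where
  "spec_norm A = onorm (\<lambda>v. A *v v)"

definition stat_set :: "(real^'n \<Rightarrow> real^'m) \<Rightarrow> (real^'n \<Rightarrow> real^'n^'m) \<Rightarrow> (real^'n) set" where
  "stat_set F J = {x. transpose (J x) *v F x = 0}"

end

theory Submission
  imports Defs
begin

text \<open>Let \<open>z\<close> be a stationary point nearest to the iterate \<open>x\<close> and \<open>D = dist(x, X*)\<close>.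
  By (A2) and (A4) the gradient \<open>J(x)^T F(x)\<close> equals \<open>J(x)^T J(x) (x - z)\<close> up to \<open>O(D^(1+r))\<close>,
  and by (A3) the regularization parameter \<open>\<lambda> = \<parallel>J(x)^T F(x)\<parallel>^r\<close> is of exact order \<open>D^r\<close>.
  Testing the step equation with \<open>u = x + d - z\<close> and using (A1) gives \<open>\<parallel>u\<parallel> = O(D)\<close>;
  expanding the gradient at \<open>x + d\<close> around \<open>z\<close> then shows that it is \<open>O(D^(1+r))\<close>,
  so (A3) yields \<open>dist(x + d, X*) = O(D^(1+r))\<close>. Started close enough, the distances halve
  at every step, the steps are summable, and the iterates converge to a stationary point.\<close>

text \<open>The library rewrites \<open>transpose A *v v\<close> to \<open>v v* A\<close>; the adjoint form is kept here.\<close>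
declare transpose_matrix_vector [simp del]

lemma norm_matrix_vector_le: "norm (A *v v) \<le> spec_norm A * norm v"
  for A :: "real^'n^'m"
  unfolding spec_norm_def by (rule onorm) simp

lemma spec_norm_nonneg: "0 \<le> spec_norm (A :: real^'n^'m)"
  unfolding spec_norm_def by (rule onorm_pos_le) simp

lemma inner_transpose_matrix_vector: "inner u (transpose A *v w) = inner (A *v u) w"
  for A :: "real^'n^'m"
  unfolding transpose_matrix_vector inner_commute[of u] dot_lmul_matrix by (rule inner_commute)

lemma norm_transpose_matrix_vector_le: "norm (transpose A *v v) \<le> spec_norm A * norm v"
  for A :: "real^'n^'m"
proof -
  let ?w = "transpose A *v v"
  have "norm ?w * norm ?w = inner ?w ?w" by (simp add: dot_square_norm power2_eq_square)
  also have "\<dots> = inner (A *v ?w) v" by (rule inner_transpose_matrix_vector)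
  also have "\<dots> \<le> norm (A *v ?w) * norm v" by (rule norm_cauchy_schwarz)
  also have "\<dots> \<le> (spec_norm A * norm ?w) * norm v"
    by (intro mult_right_mono norm_matrix_vector_le norm_ge_zero)
  finally show ?thesis
    by (cases "norm ?w = 0") (simp_all add: spec_norm_nonneg mult.commute mult.left_commute)
qed

lemma transpose_diff_matrix_vector:
  "transpose (A - B) *v v = transpose A *v v - transpose (B :: real^'n^'m) *v v"
  by (simp add: transpose_def matrix_vector_mult_def vec_eq_iff sum_subtractf algebra_simps)

lemma closed_stat_set:
  fixes F :: "real^'n \<Rightarrow> real^'m" and J :: "real^'n \<Rightarrow> real^'n^'m"
  assumes "continuous_on UNIV F" "continuous_on UNIV J"
  shows "closed (stat_set F J)"
proof -
  have componentwise:
    "(\<lambda>x. transpose (J x) *v F x) = (\<lambda>x. \<chi> i. \<Sum>j\<in>UNIV. J x $ j $ i * F x $ j)"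
    by (auto simp: vec_eq_iff matrix_vector_mult_def transpose_def)
  have "continuous_on UNIV (\<lambda>x. transpose (J x) *v F x)"
    unfolding componentwise by (intro continuous_intros assms)
  from continuous_closed_preimage_constant[OF this closed_UNIV] show ?thesis
    by (simp add: stat_set_def)
qed

lemma norm_linearization_error_le:
  fixes F :: "real^'n \<Rightarrow> real^'m" and J :: "real^'n \<Rightarrow> real^'n^'m"
  assumes F_deriv: "\<And>x. (F has_derivative (\<lambda>h. J x *v h)) (at x)"
    and J_lipschitz: "\<And>x y. x \<in> S \<Longrightarrow> y \<in> S \<Longrightarrow> spec_norm (J x - J y) \<le> L0 * norm (x - y)"
    and "convex S" "x \<in> S" "z \<in> S" "0 \<le> L0"
  shows "norm (F x - F z - J z *v (x - z)) \<le> L0 * (norm (x - z))\<^sup>2"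
proof -
  let ?T = "closed_segment z x"
  have T_sub: "?T \<subseteq> S" using assms closed_segment_subset by blast
  have "norm ((\<lambda>w. F w - J z *v w) x - (\<lambda>w. F w - J z *v w) z) \<le> (L0 * norm (x - z)) * norm (x - z)"
  proof (rule differentiable_bound[where f' = "\<lambda>w h. J w *v h - J z *v h"])
    show "((\<lambda>w. F w - J z *v w) has_derivative (\<lambda>h. J w *v h - J z *v h)) (at w within ?T)" for w
      by (rule has_derivative_at_withinI,
          rule has_derivative_diff[OF F_deriv bounded_linear_imp_has_derivative]) simp
    show "onorm (\<lambda>h. J w *v h - J z *v h) \<le> L0 * norm (x - z)" if "w \<in> ?T" for w
    proof -
      have "onorm (\<lambda>h. J w *v h - J z *v h) = spec_norm (J w - J z)"
        by (simp add: spec_norm_def matrix_vector_mult_diff_rdistrib)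
      also have "\<dots> \<le> L0 * norm (w - z)" using T_sub that assms by (intro J_lipschitz) auto
      also have "\<dots> \<le> L0 * norm (x - z)"
        using segment_bound1[OF that] \<open>0 \<le> L0\<close> by (rule mult_left_mono)
      finally show ?thesis .
    qed
  qed simp_all
  then show ?thesis by (simp add: algebra_simps power2_eq_square)
qed

lemma norm_linearization_error_at_x_le:
  fixes F :: "real^'n \<Rightarrow> real^'m" and J :: "real^'n \<Rightarrow> real^'n^'m"
  assumes F_deriv: "\<And>x. (F has_derivative (\<lambda>h. J x *v h)) (at x)"
    and J_lipschitz: "\<And>x y. x \<in> S \<Longrightarrow> y \<in> S \<Longrightarrow> spec_norm (J x - J y) \<le> L0 * norm (x - y)"
    and "convex S" "x \<in> S" "z \<in> S" "0 \<le> L0"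
  shows "norm (F x - F z - J x *v (x - z)) \<le> 2 * L0 * (norm (x - z))\<^sup>2"
proof -
  have "norm ((J x - J z) *v (x - z)) \<le> spec_norm (J x - J z) * norm (x - z)"
    by (rule norm_matrix_vector_le)
  also have "\<dots> \<le> (L0 * norm (x - z)) * norm (x - z)"
    using assms by (intro mult_right_mono J_lipschitz) auto
  also have "\<dots> = L0 * (norm (x - z))\<^sup>2" by (simp add: power2_eq_square)
  finally have "norm ((J x - J z) *v (x - z)) \<le> L0 * (norm (x - z))\<^sup>2" .
  moreover have "F x - F z - J x *v (x - z) = (F x - F z - J z *v (x - z)) - (J x - J z) *v (x - z)"
    by (simp add: algebra_simps)
  then have "norm (F x - F z - J x *v (x - z))
      \<le> norm (F x - F z - J z *v (x - z)) + norm ((J x - J z) *v (x - z))"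
    by (metis norm_triangle_ineq4)
  ultimately show ?thesis using norm_linearization_error_le[OF assms] by linarith
qed

lemma power2_le_powr_one_plus:
  fixes D r :: real
  assumes "0 \<le> D" "D \<le> 1" "r \<le> 1"
  shows "D\<^sup>2 \<le> D powr (1 + r)"
  using powr_mono'[of "1 + r" 2 D] assms by (simp add: powr_numeral)

lemma powr_one_plus_le_self:
  fixes D r :: real
  assumes "0 \<le> D" "D \<le> 1" "0 \<le> r"
  shows "D powr (1 + r) \<le> D"
  using powr_mono'[of 1 "1 + r" D] assms by simp

lemma convergent_if_increments_geometric:
  fixes x :: "nat \<Rightarrow> 'a::banach"
  assumes increments: "\<And>k. norm (x (Suc k) - x k) \<le> M * q ^ k" and "0 \<le> q" "q < 1"
  shows "convergent x"
proof -
  have "summable (\<lambda>k. x (Suc k) - x k)"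
  proof (rule summable_norm_cancel, rule summable_comparison_test)
    show "\<exists>N. \<forall>k\<ge>N. norm (norm (x (Suc k) - x k)) \<le> M * q ^ k" using increments by auto
    show "summable (\<lambda>k. M * q ^ k)" using assms by (intro summable_mult summable_geometric) auto
  qed
  then have "convergent (\<lambda>n. \<Sum>k<n. x (Suc k) - x k)" by (simp add: summable_iff_convergent)
  then have "convergent (\<lambda>n. x n - x 0)" by (simp add: sum_lessThan_telescope)
  from convergent_add[OF this convergent_const[of "x 0"]] show ?thesis by simp
qed

lemma superlinear_if_powr_step:
  fixes D :: "nat \<Rightarrow> real"
  assumes "D \<longlonglongrightarrow> 0" and D_nonneg: "\<And>k. 0 \<le> D k"
    and step: "\<And>k. D (Suc k) \<le> c * D k powr (1 + r)" and "0 < r" "0 < e"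
  shows "eventually (\<lambda>k. D (Suc k) \<le> e * D k) sequentially"
proof -
  have "(\<lambda>k. c * D k powr r) \<longlonglongrightarrow> 0"
    using assms by (intro tendsto_mult_right_zero tendsto_zero_powrI[OF _ tendsto_const]) auto
  then have "eventually (\<lambda>k. c * D k powr r < e) sequentially"
    using \<open>0 < e\<close> by (rule order_tendstoD(2))
  then show ?thesis
  proof eventually_elim
    case (elim k)
    have "D (Suc k) \<le> (c * D k powr r) * D k"
      using step[of k] D_nonneg[of k] by (simp add: powr_add algebra_simps)
    also have "\<dots> \<le> e * D k" using elim D_nonneg[of k] by (intro mult_right_mono) auto
    finally show ?case .
  qed
qed

lemma iterates_remain_local:
  fixes x :: "nat \<Rightarrow> 'a::real_normed_vector" and D :: "nat \<Rightarrow> real"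
  assumes step: "\<And>k. x k \<in> cball c \<rho> \<Longrightarrow>
      norm (x (Suc k) - x k) \<le> c1 * D k \<and> D (Suc k) \<le> c2 * D k powr (1 + r)"
    and D_nonneg: "\<And>k. 0 \<le> D k"
    and start: "x 0 \<in> cball c \<epsilon>" "D 0 \<le> \<epsilon>"
    and small: "(1 + 2 * c1) * \<epsilon> \<le> \<rho>" "c2 * \<epsilon> powr r \<le> 1 / 2"
    and "0 \<le> c1" "0 \<le> c2" "0 \<le> r"
  shows "x k \<in> cball c \<rho> \<and> D k \<le> D 0 * (1 / 2) ^ k"
proof -
  have "x k \<in> cball c \<rho> \<and> D k \<le> D 0 * (1 / 2) ^ k
      \<and> norm (x k - x 0) \<le> 2 * c1 * D 0 * (1 - (1 / 2) ^ k)"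
  proof (induction k)
    case 0
    have "0 \<le> \<epsilon>" using start D_nonneg[of 0] by linarith
    then have "\<epsilon> \<le> (1 + 2 * c1) * \<epsilon>" using mult_right_mono[of 1 "1 + 2 * c1" \<epsilon>] \<open>0 \<le> c1\<close> by simp
    then show ?case using start small by simp
  next
    case (Suc k)
    then have xk: "x k \<in> cball c \<rho>" and Dk: "D k \<le> D 0 * (1 / 2) ^ k"
      and nk: "norm (x k - x 0) \<le> 2 * c1 * D 0 * (1 - (1 / 2) ^ k)" by auto
    have D0_pos: "0 \<le> D 0" by (rule D_nonneg)
    have "D 0 * (1 / 2) ^ k \<le> D 0" using D0_pos by (simp add: mult_left_le power_le_one)
    then have "D k powr r \<le> \<epsilon> powr r"
      using Dk start D_nonneg[of k] \<open>0 \<le> r\<close> by (intro powr_mono2) auto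
    then have "c2 * D k powr r \<le> 1 / 2"
      using small \<open>0 \<le> c2\<close> by (meson mult_left_mono order_trans)
    have "D (Suc k) \<le> c2 * D k powr (1 + r)" using step[OF xk] by simp
    also have "\<dots> = (c2 * D k powr r) * D k" using D_nonneg[of k] by (simp add: powr_add)
    also have "\<dots> \<le> (1 / 2) * D k" using \<open>c2 * D k powr r \<le> 1 / 2\<close> D_nonneg[of k]
      by (rule mult_right_mono)
    finally have D_Suc: "D (Suc k) \<le> D 0 * (1 / 2) ^ Suc k" using Dk by simp
    have "norm (x (Suc k) - x 0) \<le> norm (x k - x 0) + norm (x (Suc k) - x k)"
      using norm_triangle_ineq[of "x k - x 0" "x (Suc k) - x k"] by simp
    also have "\<dots> \<le> 2 * c1 * D 0 * (1 - (1 / 2) ^ k) + c1 * (D 0 * (1 / 2) ^ k)"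
      using nk step[OF xk] mult_left_mono[OF Dk \<open>0 \<le> c1\<close>] by linarith
    also have "\<dots> = 2 * c1 * D 0 * (1 - (1 / 2) ^ Suc k)" by (simp add: algebra_simps)
    finally have n_Suc: "norm (x (Suc k) - x 0) \<le> 2 * c1 * D 0 * (1 - (1 / 2) ^ Suc k)" .
    have "D 0 * (1 - (1 / 2) ^ Suc k) \<le> D 0 * 1" using D0_pos by (intro mult_left_mono) auto
    then have "D 0 * (1 - (1 / 2) ^ Suc k) \<le> \<epsilon>" using start by linarith
    then have "2 * c1 * D 0 * (1 - (1 / 2) ^ Suc k) \<le> 2 * c1 * \<epsilon>"
      using \<open>0 \<le> c1\<close> by (simp add: mult.assoc mult_left_mono)
    then have "dist c (x (Suc k)) \<le> (1 + 2 * c1) * \<epsilon>"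
      using dist_triangle[of c "x (Suc k)" "x 0"] start n_Suc
      by (simp add: dist_norm norm_minus_commute algebra_simps)
    then show ?case using D_Suc n_Suc small by simp
  qed
  then show ?thesis by simp
qed

lemma superlinear_convergence_to_closed_set:
  fixes x :: "nat \<Rightarrow> 'a::banach" and X :: "'a set"
  assumes "closed X" "X \<noteq> {}"
    and step: "\<And>k. x k \<in> cball c \<rho> \<Longrightarrow> norm (x (Suc k) - x k) \<le> c1 * infdist (x k) X
        \<and> infdist (x (Suc k)) X \<le> c2 * infdist (x k) X powr (1 + r)"
    and start: "x 0 \<in> cball c \<epsilon>" "infdist (x 0) X \<le> \<epsilon>"
    and small: "(1 + 2 * c1) * \<epsilon> \<le> \<rho>" "c2 * \<epsilon> powr r \<le> 1 / 2"
    and "0 \<le> c1" "0 \<le> c2" "0 < r"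
  shows "((\<lambda>k. infdist (x k) X) \<longlonglongrightarrow> 0)
    \<and> (\<forall>e>0. eventually (\<lambda>k. infdist (x (Suc k)) X \<le> e * infdist (x k) X) sequentially)
    \<and> (\<exists>l \<in> X \<inter> cball c \<rho>. x \<longlonglongrightarrow> l)"
proof (intro conjI allI impI)
  define D where "D k = infdist (x k) X" for k
  have local: "x k \<in> cball c \<rho>" and D_le: "D k \<le> D 0 * (1 / 2) ^ k" for k
    using iterates_remain_local[of x c \<rho> c1 "D" c2 r \<epsilon>] assms infdist_nonneg
    unfolding D_def by auto
  have D_lim: "D \<longlonglongrightarrow> 0"
  proof (rule Lim_null_comparison)
    show "(\<lambda>k. D 0 * (1 / 2) ^ k) \<longlonglongrightarrow> 0"
      by (intro tendsto_mult_right_zero LIMSEQ_realpow_zero) auto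
  qed (use D_le in \<open>auto simp: D_def infdist_nonneg\<close>)
  then show "(\<lambda>k. infdist (x k) X) \<longlonglongrightarrow> 0" by (simp add: D_def[abs_def])
  have "D (Suc k) \<le> c2 * D k powr (1 + r)" for k using step[OF local] by (simp add: D_def)
  from superlinear_if_powr_step[OF D_lim _ this \<open>0 < r\<close>]
  show "eventually (\<lambda>k. infdist (x (Suc k)) X \<le> e * infdist (x k) X) sequentially" if "e > 0" for e
    using that by (simp add: D_def infdist_nonneg)
  have "norm (x (Suc k) - x k) \<le> (c1 * D 0) * (1 / 2) ^ k" for k
    using step[OF local] D_le[of k] \<open>0 \<le> c1\<close> unfolding D_def
    by (metis (no_types, lifting) mult.assoc mult_left_mono order_trans)
  then obtain l where x_lim: "x \<longlonglongrightarrow> l"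
    using convergent_if_increments_geometric[of x "c1 * D 0" "1 / 2"] by (auto simp: convergent_def)
  have "l \<in> cball c \<rho>"
    using local by (intro Lim_in_closed_set[OF closed_cball _ _ x_lim]) (auto intro: always_eventually)
  moreover have "infdist l X = 0"
    using LIMSEQ_unique[OF tendsto_infdist[OF x_lim]] D_lim by (simp add: D_def[abs_def])
  then have "l \<in> X" using in_closed_iff_infdist_zero[OF assms(1,2)] by simp
  ultimately show "\<exists>l \<in> X \<inter> cball c \<rho>. x \<longlonglongrightarrow> l" using x_lim by blast
qed

locale lmmss_local =
  fixes F :: "real^'n \<Rightarrow> real^'m"
    and J :: "real^'n \<Rightarrow> real^'n^'m"
    and L :: "real^'n^'p"
    and xs :: "real^'n"
    and \<gamma> \<delta> L0 \<omega> r C :: real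
  assumes F_deriv: "\<And>x. (F has_derivative (\<lambda>h. J x *v h)) (at x)"
    and xs_stat: "xs \<in> stat_set F J"
    and stat_set_closed: "closed (stat_set F J)"
    and A1: "\<gamma> > 0" "\<And>x v. x \<in> cball xs \<delta> \<Longrightarrow>
               (norm (J x *v v))\<^sup>2 + (norm (L *v v))\<^sup>2 \<ge> \<gamma> * (norm v)\<^sup>2"
    and A2: "0 < \<delta>" "\<delta> < 1" "L0 > 0"
            "\<And>x y. x \<in> cball xs \<delta> \<Longrightarrow> y \<in> cball xs \<delta> \<Longrightarrow>
               spec_norm (J x - J y) \<le> L0 * norm (x - y)"
    and A3: "\<omega> > 0" "\<And>x. x \<in> cball xs \<delta> \<Longrightarrow>
               \<omega> * infdist x (stat_set F J) \<le> norm (transpose (J x) *v F x)"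
    and A4: "0 < r" "r \<le> 1" "C \<ge> 0"
            "\<And>x z. x \<in> cball xs \<delta> \<Longrightarrow> z \<in> stat_set F J \<inter> cball xs \<delta> \<Longrightarrow>
               norm (transpose (J x - J z) *v F z) \<le> C * norm (x - z) powr (1 + r)"
begin

abbreviation "X \<equiv> stat_set F J"
abbreviation "g x \<equiv> transpose (J x) *v F x"

definition "J_bound = spec_norm (J xs) + L0"
definition "rem_const = C + 2 * J_bound * L0"
definition "grad_const = rem_const + J_bound\<^sup>2"
definition "shift_const = 1 + ((spec_norm L)\<^sup>2 + 2 * rem_const / \<omega> powr r) / \<gamma>"
definition "step_const = shift_const + 1"
definition "rate_const = (C * shift_const powr (1 + r) + rem_const
    + grad_const powr r * (spec_norm L)\<^sup>2 * step_const
    + 2 * J_bound * L0 * step_const * shift_const + 2 * J_bound * L0 * shift_const\<^sup>2) / \<omega>"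
definition "radius = \<delta> / (2 + step_const + grad_const)"

lemma constant_bounds:
  "L0 \<le> J_bound" "0 \<le> rem_const" "0 \<le> grad_const" "1 \<le> shift_const" "2 \<le> step_const"
  "0 \<le> rate_const"
proof -
  show J_bound: "L0 \<le> J_bound" unfolding J_bound_def using spec_norm_nonneg[of "J xs"] by simp
  then show rem: "0 \<le> rem_const" unfolding rem_const_def using A2 A4 by simp
  then show grad: "0 \<le> grad_const" unfolding grad_const_def by simp
  show shift: "1 \<le> shift_const" unfolding shift_const_def using rem A1 by simp
  then show step: "2 \<le> step_const" unfolding step_const_def by simp
  show "0 \<le> rate_const"
    unfolding rate_const_def using J_bound rem grad shift step A2 A3 A4
    by (intro divide_nonneg_pos add_nonneg_nonneg mult_nonneg_nonneg) auto
qed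

lemma J_bound_nonneg: "0 \<le> J_bound"
  using constant_bounds(1) A2(3) by linarith

lemma spec_norm_J_le: "x \<in> cball xs \<delta> \<Longrightarrow> spec_norm (J x) \<le> J_bound"
proof -
  assume x: "x \<in> cball xs \<delta>"
  have "spec_norm (J x - J xs) \<le> L0 * norm (x - xs)" using A2 x by (intro A2(4)) auto
  also have "\<dots> \<le> L0" using x A2 by (simp add: dist_norm norm_minus_commute mult_left_le)
  finally have near: "spec_norm (J x - J xs) \<le> L0" .
  have "norm (J x *v v) \<le> J_bound * norm v" for v
  proof -
    have "J x *v v = J xs *v v + (J x - J xs) *v v" by (simp add: algebra_simps)
    then have "norm (J x *v v) \<le> norm (J xs *v v) + norm ((J x - J xs) *v v)"
      by (metis norm_triangle_ineq)
    also have "\<dots> \<le> spec_norm (J xs) * norm v + spec_norm (J x - J xs) * norm v"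
      by (intro add_mono norm_matrix_vector_le)
    also have "\<dots> \<le> spec_norm (J xs) * norm v + L0 * norm v"
      using near by (simp add: mult_right_mono)
    finally show ?thesis unfolding J_bound_def by (simp add: algebra_simps)
  qed
  then show ?thesis unfolding spec_norm_def by (intro onorm_le)
qed

lemma norm_J_le: "x \<in> cball xs \<delta> \<Longrightarrow> norm (J x *v v) \<le> J_bound * norm v"
  by (rule order_trans[OF norm_matrix_vector_le mult_right_mono[OF spec_norm_J_le norm_ge_zero]])

lemma norm_transpose_J_le: "x \<in> cball xs \<delta> \<Longrightarrow> norm (transpose (J x) *v v) \<le> J_bound * norm v"
  by (rule order_trans[OF norm_transpose_matrix_vector_le mult_right_mono[OF spec_norm_J_le norm_ge_zero]])

lemma norm_J_diff_le:
  "x \<in> cball xs \<delta> \<Longrightarrow> y \<in> cball xs \<delta> \<Longrightarrow> norm ((J x - J y) *v v) \<le> L0 * norm (x - y) * norm v"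
  by (rule order_trans[OF norm_matrix_vector_le mult_right_mono[OF A2(4) norm_ge_zero]])

lemma norm_transpose_J_diff_le:
  "x \<in> cball xs \<delta> \<Longrightarrow> y \<in> cball xs \<delta> \<Longrightarrow>
    norm (transpose (J x - J y) *v v) \<le> L0 * norm (x - y) * norm v"
  by (rule order_trans[OF norm_transpose_matrix_vector_le mult_right_mono[OF A2(4) norm_ge_zero]])

lemma linearization_error_le:
  "x \<in> cball xs \<delta> \<Longrightarrow> z \<in> cball xs \<delta> \<Longrightarrow>
    norm (F x - F z - J x *v (x - z)) \<le> 2 * L0 * (norm (x - z))\<^sup>2"
  using norm_linearization_error_at_x_le[OF F_deriv A2(4) convex_cball] A2(3) by auto

end

locale lmmss_step = lmmss_local +
  fixes x z d
  assumes x_ball: "x \<in> cball xs \<delta>"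
    and z_stat: "z \<in> X" and z_ball: "z \<in> cball xs \<delta>"
    and z_nearest: "infdist x X = norm (x - z)"
    and dist_small: "norm (x - z) \<le> 1" "grad_const * norm (x - z) \<le> 1"
    and grad_nonzero: "g x \<noteq> 0"
    and direction: "(transpose (J x) ** J x + (norm (g x) powr r) *\<^sub>R (transpose L ** L)) *v d = - g x"
begin

abbreviation "D \<equiv> norm (x - z)"

definition "lam = norm (g x) powr r"
definition "rem = transpose (J x - J z) *v F z + transpose (J x) *v (F x - F z - J x *v (x - z))"
definition "u = x + d - z"

lemma grad_at_z: "g z = 0"
  using z_stat by (simp add: stat_set_def)

lemma D_pos: "0 < D"
  using grad_nonzero grad_at_z by auto

lemma D_powr: "D powr (1 + r) = D * D powr r" "D\<^sup>2 \<le> D powr (1 + r)" "D powr (1 + r) \<le> D"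
proof -
  show "D powr (1 + r) = D * D powr r" using D_pos by (simp add: powr_add)
  show "D\<^sup>2 \<le> D powr (1 + r)" using dist_small A4 by (intro power2_le_powr_one_plus) auto
  show "D powr (1 + r) \<le> D" using dist_small A4 by (intro powr_one_plus_le_self) auto
qed

lemma grad_eq_rem: "g x = rem + transpose (J x) *v (J x *v (x - z))"
proof -
  have "g x = transpose (J x) *v F z + transpose (J x) *v (J x *v (x - z))
      + transpose (J x) *v (F x - F z - J x *v (x - z))"
    by (simp flip: matrix_vector_right_distrib)
  moreover have "transpose (J x - J z) *v F z = transpose (J x) *v F z"
    using grad_at_z by (simp add: transpose_diff_matrix_vector)
  ultimately show ?thesis by (simp add: rem_def algebra_simps)
qed

lemma norm_rem_le: "norm rem \<le> rem_const * D powr (1 + r)"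
proof -
  have "norm (transpose (J x) *v (F x - F z - J x *v (x - z)))
      \<le> J_bound * norm (F x - F z - J x *v (x - z))"
    by (rule norm_transpose_J_le[OF x_ball])
  also have "\<dots> \<le> J_bound * (2 * L0 * D\<^sup>2)"
    using linearization_error_le[OF x_ball z_ball] J_bound_nonneg by (rule mult_left_mono)
  also have "\<dots> \<le> J_bound * (2 * L0 * D powr (1 + r))"
    using D_powr constant_bounds A2(3) by (intro mult_left_mono) auto
  finally have "norm (transpose (J x) *v (F x - F z - J x *v (x - z)))
      \<le> 2 * J_bound * L0 * D powr (1 + r)" by simp
  moreover have "norm (transpose (J x - J z) *v F z) \<le> C * D powr (1 + r)"
    using A4(4)[OF x_ball] z_stat z_ball by simp
  moreover have "norm rem \<le> norm (transpose (J x - J z) *v F z)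
      + norm (transpose (J x) *v (F x - F z - J x *v (x - z)))"
    unfolding rem_def by (rule norm_triangle_ineq)
  ultimately show ?thesis unfolding rem_const_def by (simp add: algebra_simps)
qed

lemma norm_grad_le: "norm (g x) \<le> grad_const * D"
proof -
  have "norm (transpose (J x) *v (J x *v (x - z))) \<le> J_bound * norm (J x *v (x - z))"
    by (rule norm_transpose_J_le[OF x_ball])
  also have "\<dots> \<le> J_bound * (J_bound * D)"
    using norm_J_le[OF x_ball] J_bound_nonneg by (rule mult_left_mono)
  finally have "norm (transpose (J x) *v (J x *v (x - z))) \<le> J_bound * (J_bound * D)" .
  moreover have "rem_const * D powr (1 + r) \<le> rem_const * D"
    using D_powr(3) constant_bounds by (intro mult_left_mono) auto
  then have "norm rem \<le> rem_const * D" using norm_rem_le by linarith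
  moreover have "norm (g x) \<le> norm rem + norm (transpose (J x) *v (J x *v (x - z)))"
    by (subst grad_eq_rem) (rule norm_triangle_ineq)
  ultimately show ?thesis unfolding grad_const_def by (simp add: algebra_simps power2_eq_square)
qed

lemma lam_pos: "0 < lam"
  using grad_nonzero by (simp add: lam_def)

lemma lam_ge: "\<omega> powr r * D powr r \<le> lam"
proof -
  have "\<omega> * D \<le> norm (g x)" using A3(2)[OF x_ball] z_nearest by simp
  then have "(\<omega> * D) powr r \<le> lam" unfolding lam_def using A3(1) A4(1) by (intro powr_mono2) auto
  then show ?thesis using A3(1) D_pos by (simp add: powr_mult)
qed

lemma lam_le: "lam \<le> grad_const powr r * D powr r"
proof -
  have "lam \<le> (grad_const * D) powr r" unfolding lam_def using norm_grad_le A4(1) by (intro powr_mono2) auto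
  then show ?thesis using constant_bounds D_pos by (simp add: powr_mult)
qed

lemma lam_le_one: "lam \<le> 1"
proof -
  have "lam \<le> (grad_const * D) powr r" unfolding lam_def using norm_grad_le A4(1) by (intro powr_mono2) auto
  also have "\<dots> \<le> 1 powr r" using dist_small constant_bounds A4(1) by (intro powr_mono2) auto
  finally show ?thesis by simp
qed

lemma direction_expanded: "transpose (J x) *v (J x *v d) + lam *\<^sub>R (transpose L *v (L *v d)) = - g x"
  using direction unfolding lam_def
  by (simp add: matrix_vector_mult_add_rdistrib matrix_vector_mul_assoc scaleR_matrix_vector_assoc)

lemma shifted_direction:
  "transpose (J x) *v (J x *v u) + lam *\<^sub>R (transpose L *v (L *v u))
    = - rem + lam *\<^sub>R (transpose L *v (L *v (x - z)))"
proof -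
  have "u = d + (x - z)" by (simp add: u_def)
  then have "transpose (J x) *v (J x *v u) + lam *\<^sub>R (transpose L *v (L *v u))
      = (transpose (J x) *v (J x *v d) + lam *\<^sub>R (transpose L *v (L *v d)))
        + (transpose (J x) *v (J x *v (x - z)) + lam *\<^sub>R (transpose L *v (L *v (x - z))))"
    by (simp only: matrix_vector_right_distrib scaleR_add_right add_ac)
  also have "\<dots> = - rem + lam *\<^sub>R (transpose L *v (L *v (x - z)))"
    unfolding direction_expanded grad_eq_rem by simp
  finally show ?thesis .
qed

lemma shifted_direction_JtJ:
  "transpose (J x) *v (J x *v u) = - rem - lam *\<^sub>R (transpose L *v (L *v d))"
proof -
  have "x - z = u - d" by (simp add: u_def)
  then have L_terms: "lam *\<^sub>R (transpose L *v (L *v (x - z))) - lam *\<^sub>R (transpose L *v (L *v u))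
      = - (lam *\<^sub>R (transpose L *v (L *v d)))"
    by (simp add: matrix_vector_mult_diff_distrib scaleR_diff_right)
  have "transpose (J x) *v (J x *v u)
      = (transpose (J x) *v (J x *v u) + lam *\<^sub>R (transpose L *v (L *v u)))
        - lam *\<^sub>R (transpose L *v (L *v u))" by simp
  also have "\<dots> = - rem + (lam *\<^sub>R (transpose L *v (L *v (x - z)))
      - lam *\<^sub>R (transpose L *v (L *v u)))"
    unfolding shifted_direction by (rule add_diff_eq[symmetric])
  also have "\<dots> = - rem - lam *\<^sub>R (transpose L *v (L *v d))" unfolding L_terms by simp
  finally show ?thesis .
qed

lemma energy_inequality:
  "(norm (J x *v u))\<^sup>2 + lam * (norm (L *v u))\<^sup>2
    \<le> norm u * norm rem + lam * (norm (L *v u) * norm (L *v (x - z)))"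
proof -
  have "(norm (J x *v u))\<^sup>2 + lam * (norm (L *v u))\<^sup>2
      = inner u (transpose (J x) *v (J x *v u) + lam *\<^sub>R (transpose L *v (L *v u)))"
    by (simp add: inner_add_right inner_transpose_matrix_vector power2_norm_eq_inner)
  also have "\<dots> = - inner u rem + lam * inner (L *v u) (L *v (x - z))"
    unfolding shifted_direction
    by (simp add: inner_add_right inner_diff_right inner_transpose_matrix_vector)
  also have "\<dots> \<le> norm u * norm rem + lam * (norm (L *v u) * norm (L *v (x - z)))"
    using norm_cauchy_schwarz[of "- u" rem] norm_cauchy_schwarz[of "L *v u" "L *v (x - z)"] lam_pos
    by (intro add_mono mult_left_mono) auto
  finally show ?thesis .
qed

text \<open>Since \<open>lam \<le> 1\<close>, multiplying (A1) by \<open>lam\<close> lets the energy inequality control \<open>norm u\<close>;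
  the factor \<open>lam\<close> then cancels because \<open>norm rem = O(lam * D)\<close> by (A3).\<close>
lemma norm_u_quadratic:
  "\<gamma> * (norm u)\<^sup>2 \<le> 2 * (rem_const / \<omega> powr r) * D * norm u + (spec_norm L * D)\<^sup>2"
proof -
  define A where "A = rem_const / \<omega> powr r"
  define t p q s where "t = norm u" "p = norm (J x *v u)" "q = norm (L *v u)" "s = norm (L *v (x - z))"
  have rem_le: "norm rem \<le> A * D * lam"
  proof -
    have "norm rem \<le> A * D * (\<omega> powr r * D powr r)"
      using norm_rem_le D_powr(1) A3(1) by (simp add: A_def)
    also have "\<dots> \<le> A * D * lam"
      using lam_ge constant_bounds D_pos by (intro mult_left_mono) (auto simp: A_def)
    finally show ?thesis .
  qed
  have "lam * (\<gamma> * t\<^sup>2) \<le> lam * p\<^sup>2 + lam * q\<^sup>2"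
    using A1(2)[OF x_ball, of u] lam_pos unfolding t_p_q_s_def
    by (simp flip: distrib_left add: mult_left_mono)
  moreover have "lam * p\<^sup>2 \<le> p\<^sup>2"
    by (rule mult_left_le_one_le) (use lam_pos lam_le_one in auto)
  moreover have "p\<^sup>2 + lam * q\<^sup>2 \<le> t * norm rem + lam * (q * s)"
    using energy_inequality unfolding t_p_q_s_def .
  moreover have "2 * (lam * (q * s)) \<le> lam * q\<^sup>2 + lam * s\<^sup>2"
    using mult_left_mono[OF sum_squares_bound[of q s], of lam] lam_pos by (simp add: algebra_simps)
  moreover have "t * norm rem \<le> t * (A * D * lam)"
    using rem_le unfolding t_p_q_s_def by (intro mult_left_mono) auto
  moreover have "0 \<le> p\<^sup>2" by simp
  ultimately have "lam * (\<gamma> * t\<^sup>2) \<le> 2 * (t * (A * D * lam)) + lam * s\<^sup>2"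
    by linarith
  also have "\<dots> = lam * (2 * A * D * t + s\<^sup>2)" by (simp add: algebra_simps)
  finally have "\<gamma> * t\<^sup>2 \<le> 2 * A * D * t + s\<^sup>2"
    using lam_pos by (simp add: mult_le_cancel_left_pos)
  moreover have "s\<^sup>2 \<le> (spec_norm L * D)\<^sup>2"
    unfolding t_p_q_s_def by (intro power_mono norm_matrix_vector_le) simp
  ultimately show ?thesis unfolding t_p_q_s_def A_def by linarith
qed

lemma norm_u_le: "norm u \<le> shift_const * D"
proof (cases "norm u \<le> D")
  case True
  have "1 * D \<le> shift_const * D" using constant_bounds D_pos by (intro mult_right_mono) auto
  then show ?thesis using True by linarith
next
  case False
  define B where "B = (spec_norm L)\<^sup>2 + 2 * rem_const / \<omega> powr r"
  have "(spec_norm L)\<^sup>2 * D * D \<le> (spec_norm L)\<^sup>2 * D * norm u"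
    using False D_pos by (intro mult_left_mono) auto
  then have "(spec_norm L * D)\<^sup>2 \<le> (spec_norm L)\<^sup>2 * D * norm u"
    by (simp add: power_mult_distrib power2_eq_square mult_ac)
  moreover have "2 * (rem_const / \<omega> powr r) * D * norm u + (spec_norm L)\<^sup>2 * D * norm u
      = (B * D) * norm u"
    unfolding B_def by (simp add: algebra_simps)
  ultimately have "(\<gamma> * norm u) * norm u \<le> (B * D) * norm u"
    using norm_u_quadratic by (simp only: power2_eq_square mult.assoc)
  then have "\<gamma> * norm u \<le> B * D" by (rule mult_right_le_imp_le) (use False D_pos in linarith)
  then have "norm u \<le> B / \<gamma> * D" using A1(1) by (simp add: pos_le_divide_eq mult.commute)
  also have "\<dots> \<le> (1 + B / \<gamma>) * D" using D_pos by (intro mult_right_mono) auto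
  finally show ?thesis unfolding shift_const_def B_def .
qed

lemma norm_d_le: "norm d \<le> step_const * D"
proof -
  have "d = u - (x - z)" by (simp add: u_def)
  then have "norm d \<le> norm u + D" by (metis norm_triangle_ineq4)
  then show ?thesis using norm_u_le by (simp add: step_const_def algebra_simps)
qed

lemma norm_d_mult_norm_u_le: "norm d * norm u \<le> step_const * shift_const * D powr (1 + r)"
proof -
  have "norm d * norm u \<le> (step_const * D) * (shift_const * D)"
    using norm_d_le norm_u_le constant_bounds D_pos by (intro mult_mono) auto
  also have "\<dots> = step_const * shift_const * D\<^sup>2" by (simp add: power2_eq_square)
  also have "\<dots> \<le> step_const * shift_const * D powr (1 + r)"
    using D_powr constant_bounds by (intro mult_left_mono) auto
  finally show ?thesis .
qed

lemma norm_u_squared_le: "(norm u)\<^sup>2 \<le> shift_const\<^sup>2 * D powr (1 + r)"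
proof -
  have "(norm u)\<^sup>2 \<le> (shift_const * D)\<^sup>2" using norm_u_le by (intro power_mono) auto
  also have "\<dots> \<le> shift_const\<^sup>2 * D powr (1 + r)"
    using D_powr by (simp add: power_mult_distrib mult_left_mono)
  finally show ?thesis .
qed

lemma grad_new_eq:
  "g (x + d) = transpose (J (x + d) - J z) *v F z
    + (- rem - lam *\<^sub>R (transpose L *v (L *v d)))
    + transpose (J (x + d) - J x) *v (J (x + d) *v u)
    + transpose (J x) *v ((J (x + d) - J x) *v u)
    + transpose (J (x + d)) *v (F (x + d) - F z - J (x + d) *v u)"
proof -
  let ?y = "x + d"
  have "g ?y = transpose (J ?y) *v F z + transpose (J ?y) *v (J ?y *v u)
      + transpose (J ?y) *v (F ?y - F z - J ?y *v u)"
    by (simp flip: matrix_vector_right_distrib)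
  moreover have "transpose (J ?y) *v F z = transpose (J ?y - J z) *v F z"
    using grad_at_z by (simp add: transpose_diff_matrix_vector)
  moreover have "transpose (J ?y) *v (J ?y *v u) = transpose (J x) *v (J x *v u)
      + transpose (J ?y - J x) *v (J ?y *v u) + transpose (J x) *v ((J ?y - J x) *v u)"
    by (simp add: transpose_diff_matrix_vector matrix_vector_mult_diff_rdistrib
        matrix_vector_mult_diff_distrib)
  ultimately show ?thesis using shifted_direction_JtJ by simp
qed

lemma new_iterate_minus_z: "x + d - z = u"
  by (simp add: u_def)

lemma norm_stationary_term_le:
  assumes y: "x + d \<in> cball xs \<delta>"
  shows "norm (transpose (J (x + d) - J z) *v F z) \<le> C * shift_const powr (1 + r) * D powr (1 + r)"
proof -
  have "norm (transpose (J (x + d) - J z) *v F z) \<le> C * (norm u) powr (1 + r)"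
    using A4(4)[OF y, of z] z_stat z_ball new_iterate_minus_z by simp
  also have "\<dots> \<le> C * (shift_const * D) powr (1 + r)"
    using norm_u_le A4 by (intro mult_left_mono powr_mono2) auto
  also have "\<dots> = C * shift_const powr (1 + r) * D powr (1 + r)"
    using constant_bounds D_pos by (simp add: powr_mult)
  finally show ?thesis .
qed

lemma norm_regularization_term_le:
  "norm (lam *\<^sub>R (transpose L *v (L *v d)))
    \<le> grad_const powr r * (spec_norm L)\<^sup>2 * step_const * D powr (1 + r)"
proof -
  have "norm (transpose L *v (L *v d)) \<le> spec_norm L * (spec_norm L * norm d)"
    by (rule order_trans[OF norm_transpose_matrix_vector_le
          mult_left_mono[OF norm_matrix_vector_le spec_norm_nonneg]])
  also have "\<dots> \<le> (spec_norm L)\<^sup>2 * step_const * D"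
    using mult_left_mono[OF mult_left_mono[OF norm_d_le spec_norm_nonneg] spec_norm_nonneg]
    by (simp add: power2_eq_square mult.assoc)
  finally have "norm (lam *\<^sub>R (transpose L *v (L *v d)))
      \<le> (grad_const powr r * D powr r) * ((spec_norm L)\<^sup>2 * step_const * D)"
    using lam_le lam_pos by (simp add: mult_mono)
  also have "\<dots> = grad_const powr r * (spec_norm L)\<^sup>2 * step_const * D powr (1 + r)"
    using D_powr(1) by (simp add: algebra_simps)
  finally show ?thesis .
qed

lemma norm_jacobian_variation_terms_le:
  assumes y: "x + d \<in> cball xs \<delta>"
  shows "norm (transpose (J (x + d) - J x) *v (J (x + d) *v u))
      \<le> J_bound * L0 * (step_const * shift_const * D powr (1 + r))"
    and "norm (transpose (J x) *v ((J (x + d) - J x) *v u))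
      \<le> J_bound * L0 * (step_const * shift_const * D powr (1 + r))"
proof -
  have bound: "J_bound * L0 * (norm d * norm u)
      \<le> J_bound * L0 * (step_const * shift_const * D powr (1 + r))"
    using norm_d_mult_norm_u_le J_bound_nonneg A2(3) by (intro mult_left_mono) auto
  have "norm (transpose (J (x + d) - J x) *v (J (x + d) *v u))
      \<le> L0 * norm d * norm (J (x + d) *v u)"
    using norm_transpose_J_diff_le[OF y x_ball] by simp
  also have "\<dots> \<le> L0 * norm d * (J_bound * norm u)"
    using norm_J_le[OF y] A2(3) by (intro mult_left_mono) auto
  also have "\<dots> = J_bound * L0 * (norm d * norm u)" by (simp only: mult_ac)
  finally show "norm (transpose (J (x + d) - J x) *v (J (x + d) *v u))
      \<le> J_bound * L0 * (step_const * shift_const * D powr (1 + r))" using bound by linarith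
  have "norm (transpose (J x) *v ((J (x + d) - J x) *v u)) \<le> J_bound * norm ((J (x + d) - J x) *v u)"
    by (rule norm_transpose_J_le[OF x_ball])
  also have "\<dots> \<le> J_bound * (L0 * norm d * norm u)"
    using norm_J_diff_le[OF y x_ball] J_bound_nonneg by (intro mult_left_mono) auto
  also have "\<dots> = J_bound * L0 * (norm d * norm u)" by (simp only: mult_ac)
  finally show "norm (transpose (J x) *v ((J (x + d) - J x) *v u))
      \<le> J_bound * L0 * (step_const * shift_const * D powr (1 + r))" using bound by linarith
qed

lemma norm_new_linearization_term_le:
  assumes y: "x + d \<in> cball xs \<delta>"
  shows "norm (transpose (J (x + d)) *v (F (x + d) - F z - J (x + d) *v u))
    \<le> 2 * J_bound * L0 * (shift_const\<^sup>2 * D powr (1 + r))"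
proof -
  have "norm (transpose (J (x + d)) *v (F (x + d) - F z - J (x + d) *v u))
      \<le> J_bound * norm (F (x + d) - F z - J (x + d) *v u)"
    by (rule norm_transpose_J_le[OF y])
  also have "\<dots> \<le> J_bound * (2 * L0 * (norm u)\<^sup>2)"
    using linearization_error_le[OF y z_ball] new_iterate_minus_z J_bound_nonneg
    by (intro mult_left_mono) auto
  also have "\<dots> = 2 * J_bound * L0 * (norm u)\<^sup>2" by (simp only: mult_ac)
  also have "\<dots> \<le> 2 * J_bound * L0 * (shift_const\<^sup>2 * D powr (1 + r))"
    using norm_u_squared_le J_bound_nonneg A2(3) by (intro mult_left_mono) auto
  finally show ?thesis .
qed

lemma norm_grad_new_le:
  assumes y: "x + d \<in> cball xs \<delta>"
  shows "norm (g (x + d)) \<le> \<omega> * rate_const * D powr (1 + r)"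
proof -
  define P where "P = D powr (1 + r)"
  have "norm (- rem - lam *\<^sub>R (transpose L *v (L *v d)))
      \<le> norm rem + norm (lam *\<^sub>R (transpose L *v (L *v d)))"
    using norm_triangle_ineq4[of "- rem"] by (simp only: norm_minus_cancel)
  then have rem_reg: "norm (- rem - lam *\<^sub>R (transpose L *v (L *v d)))
      \<le> rem_const * P + grad_const powr r * (spec_norm L)\<^sup>2 * step_const * P"
    using norm_rem_le norm_regularization_term_le unfolding P_def by linarith
  have "norm (g (x + d)) \<le> C * shift_const powr (1 + r) * P
      + (rem_const * P + grad_const powr r * (spec_norm L)\<^sup>2 * step_const * P)
      + J_bound * L0 * (step_const * shift_const * P) + J_bound * L0 * (step_const * shift_const * P)
      + 2 * J_bound * L0 * (shift_const\<^sup>2 * P)"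
    unfolding grad_new_eq P_def
    by (intro norm_triangle_mono norm_stationary_term_le[OF y] rem_reg[unfolded P_def]
        norm_jacobian_variation_terms_le[OF y] norm_new_linearization_term_le[OF y])
  also have "\<dots> = \<omega> * rate_const * P" using A3(1) by (simp add: rate_const_def field_simps)
  finally show ?thesis unfolding P_def .
qed

lemma infdist_new_le:
  assumes "x + d \<in> cball xs \<delta>"
  shows "infdist (x + d) X \<le> rate_const * D powr (1 + r)"
proof -
  have "\<omega> * infdist (x + d) X \<le> \<omega> * (rate_const * D powr (1 + r))"
    using A3(2)[OF assms] norm_grad_new_le[OF assms] by (simp add: mult.assoc)
  then show ?thesis using A3(1) by simp
qed

end

context lmmss_local
begin

lemma radius_bounds:
  "0 < radius" "(1 + step_const) * radius \<le> \<delta>" "grad_const * radius \<le> 1"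
  "radius \<le> 1" "radius \<le> \<delta> / 2"
proof -
  let ?N = "2 + step_const + grad_const"
  have N_pos: "0 < ?N" using constant_bounds by simp
  show pos: "0 < radius" unfolding radius_def using N_pos A2 by simp
  have scaled: "a * radius \<le> \<delta>" if "a \<le> ?N" for a
  proof -
    have "a * radius \<le> ?N * radius" using that pos by (simp add: mult_right_mono)
    also have "\<dots> = \<delta>" unfolding radius_def using N_pos by simp
    finally show ?thesis .
  qed
  show "(1 + step_const) * radius \<le> \<delta>" using scaled constant_bounds by simp
  show "grad_const * radius \<le> 1" using scaled[of grad_const] constant_bounds A2 by simp
  have "2 * radius \<le> \<delta>" using scaled constant_bounds by simp
  then show "radius \<le> 1" "radius \<le> \<delta> / 2" using A2 by simp_all
qed

lemma one_step:
  assumes xk: "xk \<in> cball xs radius"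
    and iteration: "if g xk \<noteq> 0
       then (\<exists>d. (transpose (J xk) ** J xk + (norm (g xk) powr r) *\<^sub>R (transpose L ** L)) *v d = - g xk
               \<and> xk' = xk + d)
       else xk' = xk"
  shows "norm (xk' - xk) \<le> step_const * infdist xk X
    \<and> infdist xk' X \<le> rate_const * infdist xk X powr (1 + r)"
proof (cases "g xk = 0")
  case True
  then have "infdist xk X = 0" by (simp add: stat_set_def)
  moreover have "xk' = xk" using iteration True by simp
  ultimately show ?thesis by simp
next
  case False
  then obtain d where d: "(transpose (J xk) ** J xk + (norm (g xk) powr r) *\<^sub>R (transpose L ** L)) *v d
      = - g xk" and xk': "xk' = xk + d"
    using iteration by auto
  obtain z where z: "z \<in> X" "infdist xk X = dist xk z"
    using infdist_attains_inf[OF stat_set_closed] xs_stat by blast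
  have D_le: "norm (xk - z) \<le> radius"
    using infdist_le[OF xs_stat, of xk] z xk by (simp add: dist_norm norm_minus_commute)
  have "dist xs z \<le> dist xs xk + dist xk z" by (rule dist_triangle)
  then have z_ball: "z \<in> cball xs \<delta>" using xk D_le radius_bounds z by (simp add: dist_norm)
  have "grad_const * norm (xk - z) \<le> grad_const * radius"
    using D_le constant_bounds by (intro mult_left_mono) auto
  then interpret lmmss_step F J L xs \<gamma> \<delta> L0 \<omega> r C xk z d
    using xk radius_bounds z z_ball False d D_le
    by unfold_locales (auto simp: dist_norm)
  have "step_const * norm (xk - z) \<le> step_const * radius"
    using D_le constant_bounds by (intro mult_left_mono) auto
  then have "norm d \<le> step_const * radius" using norm_d_le by linarith
  then have "dist xs (xk + d) \<le> (1 + step_const) * radius"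
    using dist_triangle[of xs "xk + d" xk] xk by (simp add: dist_norm algebra_simps)
  then have "xk + d \<in> cball xs \<delta>" using radius_bounds by simp
  then show ?thesis using norm_d_le infdist_new_le z_nearest xk' by simp
qed

lemma local_convergence:
  "\<exists>\<epsilon>>0. \<forall>x :: nat \<Rightarrow> real^'n.
     x 0 \<in> cball xs \<epsilon> \<longrightarrow>
     (\<forall>k. if g (x k) \<noteq> 0
           then (\<exists>d. (transpose (J (x k)) ** J (x k) + (norm (g (x k)) powr r) *\<^sub>R (transpose L ** L)) *v d
                       = - g (x k)
                   \<and> x (Suc k) = x k + d)
           else x (Suc k) = x k) \<longrightarrow>
     ((\<lambda>k. infdist (x k) X) \<longlonglongrightarrow> 0) \<and>
     (\<forall>e>0. eventually (\<lambda>k. infdist (x (Suc k)) X \<le> e * infdist (x k) X) sequentially) \<and>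
     (\<exists>xb \<in> X \<inter> cball xs (\<delta> / 2). x \<longlonglongrightarrow> xb)"
proof -
  \<comment> \<open>\<open>\<epsilon>\<close> keeps all iterates in the ball of radius \<open>radius\<close> and makes the distances halve.\<close>
  define \<epsilon> where "\<epsilon> = min (radius / (1 + 2 * step_const)) ((1 / (2 * rate_const + 1)) powr (1 / r))"
  have c: "2 \<le> step_const" "0 \<le> rate_const" using constant_bounds by simp_all
  have \<epsilon>_pos: "0 < \<epsilon>" unfolding \<epsilon>_def using radius_bounds c by simp
  have "\<epsilon> \<le> radius / (1 + 2 * step_const)" unfolding \<epsilon>_def by simp
  then have \<epsilon>_radius: "(1 + 2 * step_const) * \<epsilon> \<le> radius" using c by (simp add: field_simps)
  have "\<epsilon> powr r \<le> ((1 / (2 * rate_const + 1)) powr (1 / r)) powr r"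
    unfolding \<epsilon>_def using \<epsilon>_pos A4(1) \<epsilon>_def by (intro powr_mono2) auto
  also have "\<dots> = 1 / (2 * rate_const + 1)" using A4(1) c by (simp add: powr_powr)
  finally have "rate_const * \<epsilon> powr r \<le> rate_const * (1 / (2 * rate_const + 1))"
    using c by (intro mult_left_mono) auto
  also have "\<dots> \<le> 1 / 2" using c by (simp add: field_simps)
  finally have \<epsilon>_rate: "rate_const * \<epsilon> powr r \<le> 1 / 2" .
  show ?thesis
  proof (rule exI[of _ \<epsilon>], intro conjI[OF \<epsilon>_pos] allI impI)
    fix x :: "nat \<Rightarrow> real^'n"
    assume x0: "x 0 \<in> cball xs \<epsilon>"
      and iteration: "\<forall>k. if g (x k) \<noteq> 0
           then (\<exists>d. (transpose (J (x k)) ** J (x k) + (norm (g (x k)) powr r) *\<^sub>R (transpose L ** L)) *v d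
                       = - g (x k)
                   \<and> x (Suc k) = x k + d)
           else x (Suc k) = x k"
    have step: "norm (x (Suc k) - x k) \<le> step_const * infdist (x k) X
        \<and> infdist (x (Suc k)) X \<le> rate_const * infdist (x k) X powr (1 + r)"
      if "x k \<in> cball xs radius" for k
      using one_step[OF that] iteration by blast
    have "infdist (x 0) X \<le> \<epsilon>"
      using infdist_le[OF xs_stat, of "x 0"] x0 by (simp add: dist_commute)
    then have "((\<lambda>k. infdist (x k) X) \<longlonglongrightarrow> 0)
        \<and> (\<forall>e>0. eventually (\<lambda>k. infdist (x (Suc k)) X \<le> e * infdist (x k) X) sequentially)
        \<and> (\<exists>l \<in> X \<inter> cball xs radius. x \<longlonglongrightarrow> l)"
      using xs_stat c A4(1)
      by (intro superlinear_convergence_to_closed_set[OF stat_set_closed _ step x0 _ \<epsilon>_radius \<epsilon>_rate])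
        auto
    moreover have "cball xs radius \<subseteq> cball xs (\<delta> / 2)" using radius_bounds by (simp add: subset_cball)
    ultimately show "((\<lambda>k. infdist (x k) X) \<longlonglongrightarrow> 0)
        \<and> (\<forall>e>0. eventually (\<lambda>k. infdist (x (Suc k)) X \<le> e * infdist (x k) X) sequentially)
        \<and> (\<exists>xb \<in> X \<inter> cball xs (\<delta> / 2). x \<longlonglongrightarrow> xb)" by blast
  qed
qed

end

theorem mainTheorem10:
  fixes F :: "real^'n \<Rightarrow> real^'m"
    and J :: "real^'n \<Rightarrow> real^'n^'m"
    and L :: "real^'n^'p"
    and xs :: "real^'n"
    and \<gamma> \<delta> L0 \<omega> r C :: real
  assumes mn: "CARD('n) \<le> CARD('m)"
    and F_deriv: "\<And>x. (F has_derivative (\<lambda>h. J x *v h)) (at x)"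
    and F_C2: "\<exists>J'. (\<forall>x. (J has_derivative (blinfun_apply (J' x))) (at x)) \<and> continuous_on UNIV J'"
    and L_rank: "rank L = CARD('p)"
    and xs_stat: "xs \<in> stat_set F J"
    and A1: "\<gamma> > 0" "\<And>x v. x \<in> cball xs \<delta> \<Longrightarrow>
               (norm (J x *v v))\<^sup>2 + (norm (L *v v))\<^sup>2 \<ge> \<gamma> * (norm v)\<^sup>2"
    and A2: "0 < \<delta>" "\<delta> < 1" "L0 > 0"
            "\<And>x y. x \<in> cball xs \<delta> \<Longrightarrow> y \<in> cball xs \<delta> \<Longrightarrow>
               spec_norm (J x - J y) \<le> L0 * norm (x - y)"
    and A3: "\<omega> > 0" "\<And>x. x \<in> cball xs \<delta> \<Longrightarrow>
               \<omega> * infdist x (stat_set F J) \<le> norm (transpose (J x) *v F x)"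
    and A4: "0 < r" "r \<le> 1" "C \<ge> 0"
            "\<And>x z. x \<in> cball xs \<delta> \<Longrightarrow> z \<in> stat_set F J \<inter> cball xs \<delta> \<Longrightarrow>
               norm (transpose (J x - J z) *v F z) \<le> C * norm (x - z) powr (1 + r)"
  shows "\<exists>\<epsilon>>0. \<forall>x :: nat \<Rightarrow> real^'n.
           x 0 \<in> cball xs \<epsilon> \<longrightarrow>
           (\<forall>k. if transpose (J (x k)) *v F (x k) \<noteq> 0
                 then (\<exists>d. (transpose (J (x k)) ** J (x k)
                             + (norm (transpose (J (x k)) *v F (x k)) powr r) *\<^sub>R (transpose L ** L)) *v d
                           = - (transpose (J (x k)) *v F (x k))
                         \<and> x (Suc k) = x k + d)
                 else x (Suc k) = x k) \<longrightarrow>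
           ((\<lambda>k. infdist (x k) (stat_set F J)) \<longlonglongrightarrow> 0) \<and>
           (\<forall>e>0. eventually (\<lambda>k. infdist (x (Suc k)) (stat_set F J)
                                    \<le> e * infdist (x k) (stat_set F J)) sequentially) \<and>
           (\<exists>xb \<in> stat_set F J \<inter> cball xs (\<delta> / 2). x \<longlonglongrightarrow> xb)"
proof -
  obtain J' where "\<forall>x. (J has_derivative blinfun_apply (J' x)) (at x)" using F_C2 by blast
  then have J_cont: "continuous_on UNIV J"
    by (intro continuous_at_imp_continuous_on) (use has_derivative_continuous in blast)
  have F_cont: "continuous_on UNIV F"
    by (intro continuous_at_imp_continuous_on) (use F_deriv has_derivative_continuous in blast)
  interpret lmmss_local F J L xs \<gamma> \<delta> L0 \<omega> r C
  proof unfold_locales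
    show "closed (stat_set F J)" by (rule closed_stat_set[OF F_cont J_cont])
  qed (use F_deriv xs_stat A1 A2 A3 A4 in auto)
  show ?thesis by (rule local_convergence)
qed

end
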